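(* In the finite-horizon reinsurance model of the context, define non-negative coefficients recursively by $a_{N-1}=1$, $a_n=1+\beta a_{n+1}$; $\underline c_{N-1}=\operatorname{ess\,sup}(Z_N)$, $\underline c_n=(1+\beta a_{n+1})\operatorname{ess\,sup}(Z_{n+1})+\beta\underline c_{n+1}$; $\bar c_{N-1}=\rho_{N-1}(Y_N)+\pi_{R,N-1}(Y_N)$, $\bar c_n=\rho_n\big((1+\beta a_{n+1})Y_{n+1}\big)+(1+\beta a_{n+1})\pi_{R,n}(Y_{n+1})+\beta\bar c_{n+1}$, for $n=N-2,\dots,0$, and the decreasing functions $\underline b_n(x)=-\underline c_n-a_nx^+$, $\bar b_n(x)=\bar c_n+a_nx^-$. Then for every policy $\pi\in\Pi$, every $n=0,\dots,N-1$ and every history $h_n=(x_0,f_0,\dots,x_n)\in\mathcal H_n$, $$\underline b_n(x_n)\le V_{n\pi}(h_n)\le \bar b_n(x_n).$$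
   Context: Probability space $(\Omega,\mathcal A,\mathbb P)$, $p\in[1,\infty)$, $L^p$ real random variables with finite $p$-th moment, $L^p_+$ the nonnegative ones; positive values are losses. For a map $\rho:L^p\to\bar{\mathbb R}$ (risk measure) or $\pi:L^p_+\to\bar{\mathbb R}$ (premium principle): law-invariant means equal values for equally distributed arguments; monotone means $X\le X'$ a.s. implies $\rho(X)\le\rho(X')$; translation invariant means $\rho(X+c)=\rho(X)+c$ for $c\in\mathbb R$; normalized means $\rho(0)=0$; monetary means monotone and translation invariant; Fatou property means: $X_k\to X$ a.s., $X_k,X\in L^p$, $|X_k|\le W$ a.s. for some $W\in L^p$ imply $\liminf_k\rho(X_k)\ge\rho(X)$. $\mathcal F=\{f:\mathbb R_+\to\mathbb R_+ : f(t)\le t\ \forall t,\ f\text{ increasing},\ \mathrm{id}_{\mathbb R_+}-f\text{ increasing}\}$ with the metric of compact convergence. Finite-horizon model: horizon $N\in\mathbb N$, discount factor $\beta\in(0,1]$; $(Y_n,Z_n)_{n\ge1}$ an independent sequence of random vectors with $Y_n\in L^p_+$ (claims) and $Z_n\in L^\infty_+$ (premium income). For $n=0,\dots,N-1$: $\pi_{R,n}:L^p_+\to\bar{\mathbb R}$ is a law-invariant, monotone, normalized premium principle with the Fatou property and $\pi_{R,n}(Y_{n+1})<\infty$, and $\pi_{R,n}(f):=\pi_{R,n}(Y_{n+1}-f(Y_{n+1}))$ for $f\in\mathcal F$; $\rho_n:L^p\to\bar{\mathbb R}$ is a law-invariant, normalized monetary risk measure with the Fatou property such that $\rho_n(\lambda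 Y_{n+1})<\infty$ for all $\lambda\ge0$. Admissible actions $D_n(x)$ are either $\mathcal F$ for all $x$ (unconstrained) or $\{f\in\mathcal F:\pi_{R,n}(f)\le x^+\}$ (budget-constrained). Histories: $\mathcal H_0=\mathbb R$, $\mathcal H_n$ is the set of $h_n=(x_0,f_0,x_1,\dots,f_{n-1},x_n)$ with $x_k\in\mathbb R$, $f_k\in D_k(x_k)$. A policy $\pi=(d_0,\dots,d_{N-1})\in\Pi$ consists of measurable $d_n:\mathcal H_n\to\mathcal F$ with $d_n(h_n)\in D_n(x_n)$. Policy values: $V_{N\pi}\equiv0$ and $$V_{n\pi}(h_n)=\rho_n\Big(d_n(h_n)(Y_{n+1})+\pi_{R,n}(d_n(h_n))-Z_{n+1}-x_n+\beta V_{n+1,\pi}\big(h_n,d_n(h_n),x_n+Z_{n+1}-d_n(h_n)(Y_{n+1})-\pi_{R,n}(d_n(h_n))\big)\Big).$$ Standing assumption: the risk measures are such that all policy values are measurable functions of the history (so that the arguments of $\rho_n$ are random variables). $\operatorname{ess\,sup}$ denotes the essential supremum. *)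

theory Defs
  imports "HOL-Probability.Probability"
begin

definition Lp :: "'a measure \<Rightarrow> real \<Rightarrow> ('a \<Rightarrow> real) set" where
  "Lp M p = {X. X \<in> borel_measurable M \<and> integrable M (\<lambda>\<omega>. \<bar>X \<omega>\<bar> powr p)}"

definition Lp_plus :: "'a measure \<Rightarrow> real \<Rightarrow> ('a \<Rightarrow> real) set" where
  "Lp_plus M p = {X \<in> Lp M p. AE \<omega> in M. 0 \<le> X \<omega>}"

definition Linf_plus :: "'a measure \<Rightarrow> ('a \<Rightarrow> real) set" where
  "Linf_plus M = {X. X \<in> borel_measurable M \<and> (AE \<omega> in M. 0 \<le> X \<omega>)
                     \<and> esssup M (\<lambda>\<omega>. ereal (X \<omega>)) < \<infinity>}"

definition law_invariant :: "'a measure \<Rightarrow> ('a \<Rightarrow> real) set \<Rightarrow> (('a \<Rightarrow> real) \<Rightarrow> ereal) \<Rightarrow> bool" where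
  "law_invariant M S \<rho> \<longleftrightarrow>
     (\<forall>X\<in>S. \<forall>X'\<in>S. distr M borel X = distr M borel X' \<longrightarrow> \<rho> X = \<rho> X')"

definition monotone_rm :: "'a measure \<Rightarrow> ('a \<Rightarrow> real) set \<Rightarrow> (('a \<Rightarrow> real) \<Rightarrow> ereal) \<Rightarrow> bool" where
  "monotone_rm M S \<rho> \<longleftrightarrow>
     (\<forall>X\<in>S. \<forall>X'\<in>S. (AE \<omega> in M. X \<omega> \<le> X' \<omega>) \<longrightarrow> \<rho> X \<le> \<rho> X')"

definition translation_invariant :: "('a \<Rightarrow> real) set \<Rightarrow> (('a \<Rightarrow> real) \<Rightarrow> ereal) \<Rightarrow> bool" where
  "translation_invariant S \<rho> \<longleftrightarrow>
     (\<forall>X\<in>S. \<forall>c::real. \<rho> (\<lambda>\<omega>. X \<omega> + c) = \<rho> X + ereal c)"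

definition normalized :: "(('a \<Rightarrow> real) \<Rightarrow> ereal) \<Rightarrow> bool" where
  "normalized \<rho> \<longleftrightarrow> \<rho> (\<lambda>_. 0) = 0"

definition fatou_property :: "'a measure \<Rightarrow> real \<Rightarrow> ('a \<Rightarrow> real) set \<Rightarrow> (('a \<Rightarrow> real) \<Rightarrow> ereal) \<Rightarrow> bool" where
  "fatou_property M p S \<rho> \<longleftrightarrow>
     (\<forall>Xs X W. (\<forall>k. Xs k \<in> S) \<longrightarrow> X \<in> S \<longrightarrow> W \<in> Lp M p \<longrightarrow>
        (AE \<omega> in M. (\<lambda>k. Xs k \<omega>) \<longlonglongrightarrow> X \<omega>) \<longrightarrow>
        (\<forall>k. AE \<omega> in M. \<bar>Xs k \<omega>\<bar> \<le> W \<omega>) \<longrightarrow>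
        \<rho> X \<le> liminf (\<lambda>k. \<rho> (Xs k)))"

definition risk_measure :: "'a measure \<Rightarrow> real \<Rightarrow> (('a \<Rightarrow> real) \<Rightarrow> ereal) \<Rightarrow> bool" where
  "risk_measure M p \<rho> \<longleftrightarrow>
     law_invariant M (Lp M p) \<rho> \<and> monotone_rm M (Lp M p) \<rho> \<and>
     translation_invariant (Lp M p) \<rho> \<and> normalized \<rho> \<and> fatou_property M p (Lp M p) \<rho>"

definition premium_principle :: "'a measure \<Rightarrow> real \<Rightarrow> (('a \<Rightarrow> real) \<Rightarrow> ereal) \<Rightarrow> bool" where
  "premium_principle M p \<pi> \<longleftrightarrow>
     law_invariant M (Lp_plus M p) \<pi> \<and> monotone_rm M (Lp_plus M p) \<pi> \<and>
     normalized \<pi> \<and> fatou_property M p (Lp_plus M p) \<pi>"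

text \<open>Functions R_+ \<rightarrow> R_+ are represented as real functions extended by 0 on the negative axis.\<close>
definition Fset :: "(real \<Rightarrow> real) set" where
  "Fset = {f. (\<forall>t<0. f t = 0) \<and> (\<forall>t\<ge>0. 0 \<le> f t \<and> f t \<le> t)
              \<and> mono_on {0..} f \<and> mono_on {0..} (\<lambda>t. t - f t)}"

definition piRf :: "(nat \<Rightarrow> ('a \<Rightarrow> real) \<Rightarrow> ereal) \<Rightarrow> (nat \<Rightarrow> 'a \<Rightarrow> real) \<Rightarrow> nat \<Rightarrow> (real \<Rightarrow> real) \<Rightarrow> ereal" where
  "piRf piR Y n f = piR n (\<lambda>\<omega>. Y (Suc n) \<omega> - f (Y (Suc n) \<omega>))"

definition Dset :: "bool \<Rightarrow> (nat \<Rightarrow> ('a \<Rightarrow> real) \<Rightarrow> ereal) \<Rightarrow> (nat \<Rightarrow> 'a \<Rightarrow> real) \<Rightarrow> nat \<Rightarrow> real \<Rightarrow> (real \<Rightarrow> real) set" where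
  "Dset constrained piR Y n x =
     (if constrained then {f \<in> Fset. piRf piR Y n f \<le> ereal (max x 0)} else Fset)"

text \<open>A history (x_0, f_0, x_1, ..., f_{n-1}, x_n) is represented as (x_0, [(f_0,x_1), ..., (f_{n-1},x_n)]).\<close>
type_synonym hist = "real \<times> ((real \<Rightarrow> real) \<times> real) list"

definition hx :: "hist \<Rightarrow> nat \<Rightarrow> real" where
  "hx h k = (if k = 0 then fst h else snd (snd h ! (k - 1)))"

definition hf :: "hist \<Rightarrow> nat \<Rightarrow> (real \<Rightarrow> real)" where
  "hf h k = fst (snd h ! k)"

definition hcur :: "hist \<Rightarrow> real" where
  "hcur h = hx h (length (snd h))"

definition happend :: "hist \<Rightarrow> (real \<Rightarrow> real) \<Rightarrow> real \<Rightarrow> hist" where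
  "happend h f x = (fst h, snd h @ [(f, x)])"

definition Hset :: "bool \<Rightarrow> (nat \<Rightarrow> ('a \<Rightarrow> real) \<Rightarrow> ereal) \<Rightarrow> (nat \<Rightarrow> 'a \<Rightarrow> real) \<Rightarrow> nat \<Rightarrow> hist set" where
  "Hset constrained piR Y n =
     {h. length (snd h) = n \<and> (\<forall>k<n. hf h k \<in> Dset constrained piR Y k (hx h k))}"

text \<open>Measurable structure on H_n: generated by the coordinates x_k and the
  evaluations f_k(t), t \<ge> 0 (this is the Borel sigma-algebra of the product of
  R and F with the metric of compact convergence).\<close>
definition Hmeas :: "bool \<Rightarrow> (nat \<Rightarrow> ('a \<Rightarrow> real) \<Rightarrow> ereal) \<Rightarrow> (nat \<Rightarrow> 'a \<Rightarrow> real) \<Rightarrow> nat \<Rightarrow> hist measure" where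
  "Hmeas constrained piR Y n = sigma (Hset constrained piR Y n)
     ({{h \<in> Hset constrained piR Y n. hx h k \<in> B} | k B. k \<le> n \<and> B \<in> sets borel}
      \<union> {{h \<in> Hset constrained piR Y n. hf h k t \<in> B} | k t B. k < n \<and> 0 \<le> t \<and> B \<in> sets borel})"

definition is_policy :: "nat \<Rightarrow> bool \<Rightarrow> (nat \<Rightarrow> ('a \<Rightarrow> real) \<Rightarrow> ereal) \<Rightarrow> (nat \<Rightarrow> 'a \<Rightarrow> real)
    \<Rightarrow> (nat \<Rightarrow> hist \<Rightarrow> real \<Rightarrow> real) \<Rightarrow> bool" where
  "is_policy N constrained piR Y d \<longleftrightarrow>
     (\<forall>n<N. \<forall>h\<in>Hset constrained piR Y n. d n h \<in> Dset constrained piR Y n (hcur h)) \<and>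
     (\<forall>n<N. \<forall>t\<ge>0. (\<lambda>h. d n h t) \<in> measurable (Hmeas constrained piR Y n) borel)"

text \<open>The argument of rho_n in the recursion, given the value function W = V_{n+1,pi}.
  V_{n+1} is real-valued by the theorem; real_of_ereal is used to embed it into a real random variable.\<close>
definition pol_arg :: "real \<Rightarrow> (nat \<Rightarrow> ('a \<Rightarrow> real) \<Rightarrow> ereal) \<Rightarrow> (nat \<Rightarrow> 'a \<Rightarrow> real) \<Rightarrow> (nat \<Rightarrow> 'a \<Rightarrow> real)
    \<Rightarrow> (nat \<Rightarrow> hist \<Rightarrow> real \<Rightarrow> real) \<Rightarrow> nat \<Rightarrow> (hist \<Rightarrow> ereal) \<Rightarrow> hist \<Rightarrow> 'a \<Rightarrow> real" where
  "pol_arg \<beta> piR Y Z d n W h = (\<lambda>\<omega>.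
     let f = d n h; pr = real_of_ereal (piRf piR Y n f); x = hcur h;
         x' = x + Z (Suc n) \<omega> - f (Y (Suc n) \<omega>) - pr
     in f (Y (Suc n) \<omega>) + pr - Z (Suc n) \<omega> - x + \<beta> * real_of_ereal (W (happend h f x')))"

text \<open>Vk k n h = V_{n,pi}(h) when k = N - n steps remain.\<close>
primrec Vk :: "real \<Rightarrow> (nat \<Rightarrow> ('a \<Rightarrow> real) \<Rightarrow> ereal) \<Rightarrow> (nat \<Rightarrow> ('a \<Rightarrow> real) \<Rightarrow> ereal)
    \<Rightarrow> (nat \<Rightarrow> 'a \<Rightarrow> real) \<Rightarrow> (nat \<Rightarrow> 'a \<Rightarrow> real) \<Rightarrow> (nat \<Rightarrow> hist \<Rightarrow> real \<Rightarrow> real)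
    \<Rightarrow> nat \<Rightarrow> nat \<Rightarrow> hist \<Rightarrow> ereal" where
  "Vk \<beta> rho piR Y Z d 0 n h = 0"
| "Vk \<beta> rho piR Y Z d (Suc k) n h =
     rho n (pol_arg \<beta> piR Y Z d n (Vk \<beta> rho piR Y Z d k (Suc n)) h)"

definition Vpol :: "nat \<Rightarrow> real \<Rightarrow> (nat \<Rightarrow> ('a \<Rightarrow> real) \<Rightarrow> ereal) \<Rightarrow> (nat \<Rightarrow> ('a \<Rightarrow> real) \<Rightarrow> ereal)
    \<Rightarrow> (nat \<Rightarrow> 'a \<Rightarrow> real) \<Rightarrow> (nat \<Rightarrow> 'a \<Rightarrow> real) \<Rightarrow> (nat \<Rightarrow> hist \<Rightarrow> real \<Rightarrow> real)
    \<Rightarrow> nat \<Rightarrow> hist \<Rightarrow> ereal" where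
  "Vpol N \<beta> rho piR Y Z d n h = Vk \<beta> rho piR Y Z d (N - n) n h"

text \<open>ak k = a_{N-1-k}: a_{N-1} = 1, a_n = 1 + beta a_{n+1}.\<close>
primrec ak :: "real \<Rightarrow> nat \<Rightarrow> real" where
  "ak \<beta> 0 = 1"
| "ak \<beta> (Suc k) = 1 + \<beta> * ak \<beta> k"

definition acoef :: "nat \<Rightarrow> real \<Rightarrow> nat \<Rightarrow> real" where
  "acoef N \<beta> n = ak \<beta> (N - 1 - n)"

text \<open>clk k n = lower c_n where k = N - 1 - n.\<close>
primrec clk :: "'a measure \<Rightarrow> real \<Rightarrow> (nat \<Rightarrow> 'a \<Rightarrow> real) \<Rightarrow> nat \<Rightarrow> nat \<Rightarrow> ereal" where
  "clk M \<beta> Z 0 n = esssup M (\<lambda>\<omega>. ereal (Z (Suc n) \<omega>))"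
| "clk M \<beta> Z (Suc k) n = ereal (1 + \<beta> * ak \<beta> k) * esssup M (\<lambda>\<omega>. ereal (Z (Suc n) \<omega>))
                          + ereal \<beta> * clk M \<beta> Z k (Suc n)"

definition c_low :: "'a measure \<Rightarrow> nat \<Rightarrow> real \<Rightarrow> (nat \<Rightarrow> 'a \<Rightarrow> real) \<Rightarrow> nat \<Rightarrow> ereal" where
  "c_low M N \<beta> Z n = clk M \<beta> Z (N - 1 - n) n"

text \<open>cuk k n = upper c_n where k = N - 1 - n.\<close>
primrec cuk :: "real \<Rightarrow> (nat \<Rightarrow> ('a \<Rightarrow> real) \<Rightarrow> ereal) \<Rightarrow> (nat \<Rightarrow> ('a \<Rightarrow> real) \<Rightarrow> ereal)
    \<Rightarrow> (nat \<Rightarrow> 'a \<Rightarrow> real) \<Rightarrow> nat \<Rightarrow> nat \<Rightarrow> ereal" where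
  "cuk \<beta> rho piR Y 0 n = rho n (Y (Suc n)) + piR n (Y (Suc n))"
| "cuk \<beta> rho piR Y (Suc k) n =
     rho n (\<lambda>\<omega>. (1 + \<beta> * ak \<beta> k) * Y (Suc n) \<omega>)
     + ereal (1 + \<beta> * ak \<beta> k) * piR n (Y (Suc n))
     + ereal \<beta> * cuk \<beta> rho piR Y k (Suc n)"

definition c_up :: "nat \<Rightarrow> real \<Rightarrow> (nat \<Rightarrow> ('a \<Rightarrow> real) \<Rightarrow> ereal) \<Rightarrow> (nat \<Rightarrow> ('a \<Rightarrow> real) \<Rightarrow> ereal)
    \<Rightarrow> (nat \<Rightarrow> 'a \<Rightarrow> real) \<Rightarrow> nat \<Rightarrow> ereal" where
  "c_up N \<beta> rho piR Y n = cuk \<beta> rho piR Y (N - 1 - n) n"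

definition b_low :: "'a measure \<Rightarrow> nat \<Rightarrow> real \<Rightarrow> (nat \<Rightarrow> 'a \<Rightarrow> real) \<Rightarrow> nat \<Rightarrow> real \<Rightarrow> ereal" where
  "b_low M N \<beta> Z n x = - c_low M N \<beta> Z n - ereal (acoef N \<beta> n * max x 0)"

definition b_up :: "nat \<Rightarrow> real \<Rightarrow> (nat \<Rightarrow> ('a \<Rightarrow> real) \<Rightarrow> ereal) \<Rightarrow> (nat \<Rightarrow> ('a \<Rightarrow> real) \<Rightarrow> ereal)
    \<Rightarrow> (nat \<Rightarrow> 'a \<Rightarrow> real) \<Rightarrow> nat \<Rightarrow> real \<Rightarrow> ereal" where
  "b_up N \<beta> rho piR Y n x = c_up N \<beta> rho piR Y n + ereal (acoef N \<beta> n * max (- x) 0)"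

end

theory Submission
  imports Defs
begin

(* Backward induction on n, starting from V_N = 0. If V_{n+1} lies between the affine
   functions -c - a x^+ and c' + a x^-, then, since 0 <= f(y) <= y and
   0 <= pi_R(f) <= pi_R(Y), the argument of rho_n lies almost surely between a constant and
   (1 + beta a) Y_{n+1} plus a constant; monotonicity and translation invariance of rho_n turn
   this into the bounds for V_n. The estimates hold pathwise. *)

lemma Lp_dominated:
  assumes "X \<in> borel_measurable M" "G \<in> Lp M p" "0 \<le> p"
    and "AE \<omega> in M. \<bar>X \<omega>\<bar> \<le> \<bar>G \<omega>\<bar>"
  shows "X \<in> Lp M p"
proof -
  have "integrable M (\<lambda>\<omega>. \<bar>X \<omega>\<bar> powr p)"
  proof (rule Bochner_Integration.integrable_bound)
    show "integrable M (\<lambda>\<omega>. \<bar>G \<omega>\<bar> powr p)" using assms(2) by (simp add: Lp_def)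
    show "(\<lambda>\<omega>. \<bar>X \<omega>\<bar> powr p) \<in> borel_measurable M" using assms(1) by measurable
    show "AE \<omega> in M. norm (\<bar>X \<omega>\<bar> powr p) \<le> norm (\<bar>G \<omega>\<bar> powr p)"
      using assms(4) by eventually_elim (simp add: powr_mono2 assms(3))
  qed
  then show ?thesis using assms(1) by (simp add: Lp_def)
qed

lemma abs_add_powr_le:
  fixes a b p :: real
  assumes "0 \<le> p"
  shows "\<bar>a + b\<bar> powr p \<le> 2 powr p * (\<bar>a\<bar> powr p + \<bar>b\<bar> powr p)"
proof -
  have "\<bar>a + b\<bar> powr p \<le> (2 * max \<bar>a\<bar> \<bar>b\<bar>) powr p"
    by (rule powr_mono2) (auto simp: assms)
  also have "\<dots> = 2 powr p * max \<bar>a\<bar> \<bar>b\<bar> powr p"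
    by (simp add: powr_mult)
  also have "max \<bar>a\<bar> \<bar>b\<bar> powr p \<le> \<bar>a\<bar> powr p + \<bar>b\<bar> powr p"
    by (cases "\<bar>a\<bar> \<le> \<bar>b\<bar>") (auto simp: max_def)
  finally show ?thesis by simp
qed

lemma Lp_add:
  assumes "X \<in> Lp M p" "Y \<in> Lp M p" "0 \<le> p"
  shows "(\<lambda>\<omega>. X \<omega> + Y \<omega>) \<in> Lp M p"
proof -
  have X: "X \<in> borel_measurable M" "integrable M (\<lambda>\<omega>. \<bar>X \<omega>\<bar> powr p)"
    and Y: "Y \<in> borel_measurable M" "integrable M (\<lambda>\<omega>. \<bar>Y \<omega>\<bar> powr p)"
    using assms by (auto simp: Lp_def)
  have "integrable M (\<lambda>\<omega>. \<bar>X \<omega> + Y \<omega>\<bar> powr p)"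
  proof (rule Bochner_Integration.integrable_bound)
    show "integrable M (\<lambda>\<omega>. 2 powr p * (\<bar>X \<omega>\<bar> powr p + \<bar>Y \<omega>\<bar> powr p))"
      using X Y by auto
    show "(\<lambda>\<omega>. \<bar>X \<omega> + Y \<omega>\<bar> powr p) \<in> borel_measurable M" using X Y by measurable
    show "AE \<omega> in M. norm (\<bar>X \<omega> + Y \<omega>\<bar> powr p)
                       \<le> norm (2 powr p * (\<bar>X \<omega>\<bar> powr p + \<bar>Y \<omega>\<bar> powr p))"
      using abs_add_powr_le[OF assms(3)] by auto
  qed
  then show ?thesis using X Y by (simp add: Lp_def)
qed

lemma Lp_cmult:
  assumes "X \<in> Lp M p"
  shows "(\<lambda>\<omega>. c * X \<omega>) \<in> Lp M p"
proof -
  have "(\<lambda>\<omega>. \<bar>c * X \<omega>\<bar> powr p) = (\<lambda>\<omega>. \<bar>c\<bar> powr p * \<bar>X \<omega>\<bar> powr p)"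
    by (simp add: abs_mult powr_mult)
  moreover have "X \<in> borel_measurable M" "integrable M (\<lambda>\<omega>. \<bar>X \<omega>\<bar> powr p)"
    using assms by (auto simp: Lp_def)
  ultimately show ?thesis by (simp add: Lp_def)
qed

lemma Lp_abs: "X \<in> Lp M p \<Longrightarrow> (\<lambda>\<omega>. \<bar>X \<omega>\<bar>) \<in> Lp M p"
  by (simp add: Lp_def borel_measurable_abs)

lemma Lp_const: "finite_measure M \<Longrightarrow> (\<lambda>_. c) \<in> Lp M p"
  by (simp add: Lp_def finite_measure.integrable_const)

lemma Lp_plus_cmult: "X \<in> Lp_plus M p \<Longrightarrow> 0 \<le> c \<Longrightarrow> (\<lambda>\<omega>. c * X \<omega>) \<in> Lp_plus M p"
  by (auto simp: Lp_plus_def Lp_cmult elim: AE_mp)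

lemma Fset_nonneg: "f \<in> Fset \<Longrightarrow> 0 \<le> f t"
  by (cases "t < 0") (auto simp: Fset_def)

lemma Fset_le: "f \<in> Fset \<Longrightarrow> 0 \<le> t \<Longrightarrow> f t \<le> t"
  by (auto simp: Fset_def)

lemma Fset_mono: "f \<in> Fset \<Longrightarrow> mono f"
proof (rule monoI)
  fix s t :: real assume f: "f \<in> Fset" and "s \<le> t"
  show "f s \<le> f t"
  proof (cases "s < 0")
    case True then show ?thesis using f Fset_nonneg[OF f, of t] by (simp add: Fset_def)
  next
    case False then show ?thesis using \<open>s \<le> t\<close> f by (auto simp: Fset_def mono_on_def)
  qed
qed

lemma Fset_borel_measurable: "f \<in> Fset \<Longrightarrow> f \<in> borel_measurable borel"
  by (rule borel_measurable_mono[OF Fset_mono])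

lemma Lp_plus_ceded:
  assumes "f \<in> Fset" "Y \<in> Lp_plus M p" "0 \<le> p"
  shows "(\<lambda>\<omega>. Y \<omega> - f (Y \<omega>)) \<in> Lp_plus M p"
proof -
  have Y: "Y \<in> borel_measurable M" "Y \<in> Lp M p" "AE \<omega> in M. 0 \<le> Y \<omega>"
    using assms(2) by (auto simp: Lp_plus_def Lp_def)
  have "(\<lambda>\<omega>. Y \<omega> - f (Y \<omega>)) \<in> borel_measurable M"
    using Y(1) Fset_borel_measurable[OF assms(1)] by measurable
  moreover have "AE \<omega> in M. 0 \<le> Y \<omega> - f (Y \<omega>) \<and> \<bar>Y \<omega> - f (Y \<omega>)\<bar> \<le> \<bar>Y \<omega>\<bar>"
    using Y(3) by eventually_elim (use Fset_nonneg Fset_le assms(1) in fastforce)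
  ultimately show ?thesis
    using Lp_dominated[OF _ Y(2) assms(3)] by (auto simp: Lp_plus_def elim: AE_mp)
qed

lemma monotone_rmD:
  "monotone_rm M S \<rho> \<Longrightarrow> X \<in> S \<Longrightarrow> X' \<in> S \<Longrightarrow> (AE \<omega> in M. X \<omega> \<le> X' \<omega>) \<Longrightarrow> \<rho> X \<le> \<rho> X'"
  by (simp add: monotone_rm_def)

lemma risk_measure_add_const:
  "risk_measure M p R \<Longrightarrow> X \<in> Lp M p \<Longrightarrow> R (\<lambda>\<omega>. X \<omega> + c) = R X + ereal c"
  unfolding risk_measure_def translation_invariant_def by blast

lemma risk_measure_const:
  assumes "prob_space M" "risk_measure M p R"
  shows "R (\<lambda>_. c) = ereal c"
proof -
  have "(\<lambda>_. 0) \<in> Lp M p"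
    by (rule Lp_const[OF prob_space.finite_measure[OF assms(1)]])
  moreover have "R (\<lambda>_. 0) = 0"
    using assms(2) unfolding risk_measure_def normalized_def by blast
  ultimately show ?thesis
    using risk_measure_add_const[OF assms(2), of "\<lambda>_. 0" c] by simp
qed

lemma risk_measure_nonneg:
  assumes "prob_space M" "risk_measure M p R" "X \<in> Lp_plus M p"
  shows "0 \<le> R X"
proof -
  have "R (\<lambda>_. 0) \<le> R X"
    using assms by (intro monotone_rmD[of M "Lp M p" R])
      (auto simp: risk_measure_def Lp_plus_def Lp_const[OF prob_space.finite_measure[OF assms(1)]])
  then show ?thesis using assms(2) by (simp add: risk_measure_def normalized_def)
qed

lemma premium_principle_nonneg:
  assumes "prob_space M" "premium_principle M p P" "X \<in> Lp_plus M p"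
  shows "0 \<le> P X"
proof -
  have "P (\<lambda>_. 0) \<le> P X"
    using assms by (intro monotone_rmD[of M "Lp_plus M p" P])
      (auto simp: premium_principle_def Lp_plus_def Lp_const[OF prob_space.finite_measure[OF assms(1)]])
  then show ?thesis using assms(2) by (simp add: premium_principle_def normalized_def)
qed

lemma premium_ceded_le:
  assumes "premium_principle M p P" "f \<in> Fset" "Y \<in> Lp_plus M p" "0 \<le> p"
  shows "P (\<lambda>\<omega>. Y \<omega> - f (Y \<omega>)) \<le> P Y"
  using assms by (intro monotone_rmD[of M "Lp_plus M p" P])
    (auto simp: premium_principle_def Lp_plus_ceded Fset_nonneg)

lemma risk_measure_AE_bounds:
  assumes "prob_space M" "0 \<le> p" "risk_measure M p R"
    and "X \<in> borel_measurable M" "U \<in> Lp M p"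
    and bounds: "AE \<omega> in M. L \<le> X \<omega> \<and> X \<omega> \<le> U \<omega>"
  shows "ereal L \<le> R X" "R X \<le> R U"
proof -
  have const: "(\<lambda>_. c) \<in> Lp M p" for c
    by (rule Lp_const[OF prob_space.finite_measure[OF assms(1)]])
  have "AE \<omega> in M. \<bar>X \<omega>\<bar> \<le> \<bar>\<bar>U \<omega>\<bar> + \<bar>L\<bar>\<bar>"
    using bounds by eventually_elim auto
  then have X: "X \<in> Lp M p"
    by (rule Lp_dominated[OF assms(4) Lp_add[OF Lp_abs[OF assms(5)] const assms(2)] assms(2)])
  have mono: "monotone_rm M (Lp M p) R" using assms(3) by (simp add: risk_measure_def)
  have "R (\<lambda>_. L) \<le> R X"
    using bounds by (intro monotone_rmD[OF mono const X]) (auto elim: AE_mp)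
  then show "ereal L \<le> R X" using risk_measure_const[OF assms(1,3)] by simp
  show "R X \<le> R U"
    using bounds by (intro monotone_rmD[OF mono X assms(5)]) (auto elim: AE_mp)
qed

lemma Linf_plus_esssup:
  assumes "prob_space M" "Z \<in> Linf_plus M"
  obtains s where "esssup M (\<lambda>\<omega>. ereal (Z \<omega>)) = ereal s" "AE \<omega> in M. Z \<omega> \<le> s"
proof -
  interpret prob_space M by fact
  have Z: "AE \<omega> in M. 0 \<le> Z \<omega>" "esssup M (\<lambda>\<omega>. ereal (Z \<omega>)) < \<infinity>"
    using assms(2) by (auto simp: Linf_plus_def)
  have "esssup M (\<lambda>_. ereal 0) \<le> esssup M (\<lambda>\<omega>. ereal (Z \<omega>))"
    by (rule esssup_AE_mono) (use Z(1) in auto)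
  then have "0 \<le> esssup M (\<lambda>\<omega>. ereal (Z \<omega>))"
    using esssup_const[of M "ereal 0"] emeasure_space_1 by (simp add: zero_ereal_def)
  with Z(2) obtain s where s: "esssup M (\<lambda>\<omega>. ereal (Z \<omega>)) = ereal s"
    by (cases "esssup M (\<lambda>\<omega>. ereal (Z \<omega>))") auto
  moreover have "AE \<omega> in M. Z \<omega> \<le> s"
    using esssup_AE[of "\<lambda>\<omega>. ereal (Z \<omega>)" M] unfolding s by auto
  ultimately show ?thesis by (rule that)
qed

(* The argument of rho_n as a function of the claim y = Y_{n+1} and the premium income
   z = Z_{n+1}, for treaty f with premium q, current surplus x and continuation value W. *)
definition period_loss :: "real \<Rightarrow> (real \<Rightarrow> real) \<Rightarrow> real \<Rightarrow> (real \<Rightarrow> ereal) \<Rightarrow> real \<Rightarrow> real \<Rightarrow> real \<Rightarrow> real"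
  where "period_loss \<beta> f q W x y z = f y + q - z - x + \<beta> * real_of_ereal (W (x + z - f y - q))"

lemma period_loss_bounds:
  fixes W :: "real \<Rightarrow> ereal"
  assumes "0 \<le> \<beta>" "0 \<le> a" "0 \<le> y" "0 \<le> z" "z \<le> s" "f \<in> Fset" "0 \<le> q" "q \<le> \<pi>"
    and W: "\<And>x. ereal (- cl - a * max x 0) \<le> W x \<and> W x \<le> ereal (cu + a * max (- x) 0)"
  shows "- ((1 + \<beta> * a) * s) - \<beta> * cl - (1 + \<beta> * a) * max x 0 \<le> period_loss \<beta> f q W x y z"
    and "period_loss \<beta> f q W x y z
           \<le> (1 + \<beta> * a) * y + ((1 + \<beta> * a) * \<pi> + \<beta> * cu + (1 + \<beta> * a) * max (- x) 0)"
proof -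
  define x' where "x' = x + z - f y - q"
  define w where "w = real_of_ereal (W x')"
  have loss: "period_loss \<beta> f q W x y z = f y + q - z - x + \<beta> * w"
    by (simp add: period_loss_def x'_def w_def)
  have w: "- cl - a * max x' 0 \<le> w" "w \<le> cu + a * max (- x') 0"
    using W[of x'] unfolding w_def by (cases "W x'"; auto)+
  have f: "0 \<le> f y" "f y \<le> y" using Fset_nonneg Fset_le assms(3,6) by auto
  have "a * max x' 0 \<le> a * (max x 0 + s)"
    using assms f by (intro mult_left_mono) (auto simp: x'_def)
  then have "\<beta> * (- cl - a * (max x 0 + s)) \<le> \<beta> * w"
    using assms(1) w(1) by (intro mult_left_mono) auto
  moreover have "0 \<le> \<beta> * a * max x 0" "0 \<le> \<beta> * a * s" using assms by auto
  ultimately show "- ((1 + \<beta> * a) * s) - \<beta> * cl - (1 + \<beta> * a) * max x 0 \<le> period_loss \<beta> f q W x y z"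
    unfolding loss using assms(4,5,7) f by (simp add: algebra_simps)
  have "a * max (- x') 0 \<le> a * (y + \<pi> + max (- x) 0)"
    using assms f by (intro mult_left_mono) (auto simp: x'_def)
  then have "\<beta> * w \<le> \<beta> * (cu + a * (y + \<pi> + max (- x) 0))"
    using assms(1) w(2) by (intro mult_left_mono) auto
  then show "period_loss \<beta> f q W x y z
               \<le> (1 + \<beta> * a) * y + ((1 + \<beta> * a) * \<pi> + \<beta> * cu + (1 + \<beta> * a) * max (- x) 0)"
    unfolding loss using assms(4,7,8) f by (simp add: algebra_simps)
qed

lemma risk_period_loss_bounds:
  fixes W :: "real \<Rightarrow> ereal" and Y Z :: "'a \<Rightarrow> real"
  assumes M: "prob_space M" and "0 \<le> p" "0 \<le> \<beta>" "0 \<le> a"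
    and Y: "Y \<in> Lp_plus M p" and Z: "Z \<in> Linf_plus M"
    and R: "risk_measure M p R" and P: "premium_principle M p P" "P Y < \<infinity>"
    and f: "f \<in> Fset"
    and W: "\<And>x. ereal (- cl - a * max x 0) \<le> W x \<and> W x \<le> ereal (cu + a * max (- x) 0)"
  defines "q \<equiv> real_of_ereal (P (\<lambda>\<omega>. Y \<omega> - f (Y \<omega>)))"
  assumes meas: "(\<lambda>\<omega>. period_loss \<beta> f q W x (Y \<omega>) (Z \<omega>)) \<in> borel_measurable M"
  shows "- (ereal (1 + \<beta> * a) * esssup M (\<lambda>\<omega>. ereal (Z \<omega>)) + ereal \<beta> * ereal cl)
           - ereal ((1 + \<beta> * a) * max x 0)
         \<le> R (\<lambda>\<omega>. period_loss \<beta> f q W x (Y \<omega>) (Z \<omega>))"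
    and "R (\<lambda>\<omega>. period_loss \<beta> f q W x (Y \<omega>) (Z \<omega>))
         \<le> R (\<lambda>\<omega>. (1 + \<beta> * a) * Y \<omega>) + ereal (1 + \<beta> * a) * P Y + ereal \<beta> * ereal cu
           + ereal ((1 + \<beta> * a) * max (- x) 0)"
proof -
  obtain s where s: "esssup M (\<lambda>\<omega>. ereal (Z \<omega>)) = ereal s" "AE \<omega> in M. Z \<omega> \<le> s"
    using Linf_plus_esssup[OF M Z] by metis
  obtain \<pi> where \<pi>: "P Y = ereal \<pi>"
    using premium_principle_nonneg[OF M P(1) Y] P(2) by (cases "P Y") auto
  have "0 \<le> P (\<lambda>\<omega>. Y \<omega> - f (Y \<omega>))" "P (\<lambda>\<omega>. Y \<omega> - f (Y \<omega>)) \<le> P Y"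
    using premium_principle_nonneg[OF M P(1) Lp_plus_ceded[OF f Y]] premium_ceded_le[OF P(1) f Y]
      assms(2) by auto
  then have q: "0 \<le> q" "q \<le> \<pi>"
    unfolding q_def \<pi> by (cases "P (\<lambda>\<omega>. Y \<omega> - f (Y \<omega>))"; auto)+
  have Y0: "AE \<omega> in M. 0 \<le> Y \<omega>" and Z0: "AE \<omega> in M. 0 \<le> Z \<omega>"
    using Y Z by (simp_all add: Lp_plus_def Linf_plus_def)
  define A where "A = 1 + \<beta> * a"
  define K where "K = A * \<pi> + \<beta> * cu + A * max (- x) 0"
  have "AE \<omega> in M. - (A * s) - \<beta> * cl - A * max x 0 \<le> period_loss \<beta> f q W x (Y \<omega>) (Z \<omega>)
                     \<and> period_loss \<beta> f q W x (Y \<omega>) (Z \<omega>) \<le> A * Y \<omega> + K"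
    using Y0 Z0 s(2)
  proof eventually_elim
    case (elim \<omega>)
    show ?case
      using period_loss_bounds[OF assms(3,4) elim(1,2,3) f q W] by (simp add: A_def K_def)
  qed
  note bounds = risk_measure_AE_bounds[OF M assms(2) R meas _ this]
  have AY: "(\<lambda>\<omega>. A * Y \<omega>) \<in> Lp M p"
    using Y by (simp add: Lp_plus_def Lp_cmult)
  have "R (\<lambda>\<omega>. A * Y \<omega> + K) = R (\<lambda>\<omega>. A * Y \<omega>) + ereal K"
    by (rule risk_measure_add_const[OF R AY])
  then have "ereal (- (A * s) - \<beta> * cl - A * max x 0) \<le> R (\<lambda>\<omega>. period_loss \<beta> f q W x (Y \<omega>) (Z \<omega>))"
    "R (\<lambda>\<omega>. period_loss \<beta> f q W x (Y \<omega>) (Z \<omega>)) \<le> R (\<lambda>\<omega>. A * Y \<omega>) + ereal K"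
    using bounds Lp_add[OF AY Lp_const[OF prob_space.finite_measure[OF M]] assms(2)] by auto
  then show "- (ereal (1 + \<beta> * a) * esssup M (\<lambda>\<omega>. ereal (Z \<omega>)) + ereal \<beta> * ereal cl)
           - ereal ((1 + \<beta> * a) * max x 0)
         \<le> R (\<lambda>\<omega>. period_loss \<beta> f q W x (Y \<omega>) (Z \<omega>))"
    and "R (\<lambda>\<omega>. period_loss \<beta> f q W x (Y \<omega>) (Z \<omega>))
         \<le> R (\<lambda>\<omega>. (1 + \<beta> * a) * Y \<omega>) + ereal (1 + \<beta> * a) * P Y + ereal \<beta> * ereal cu
           + ereal ((1 + \<beta> * a) * max (- x) 0)"
    by (simp_all add: s(1) \<pi> A_def K_def add.assoc)
qed

lemma hcur_happend [simp]: "hcur (happend h f y) = y"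
  by (simp add: hcur_def happend_def hx_def)

lemma happend_in_Hset:
  assumes "h \<in> Hset c piR Y n" "f \<in> Dset c piR Y n (hcur h)"
  shows "happend h f y \<in> Hset c piR Y (Suc n)"
proof -
  have len: "length (snd h) = n" and D: "\<forall>k<n. hf h k \<in> Dset c piR Y k (hx h k)"
    using assms(1) by (auto simp: Hset_def)
  have "hf (happend h f y) k = hf h k" "hx (happend h f y) k = hx h k" if "k < n" for k
    using that len by (auto simp: hf_def hx_def happend_def nth_append)
  moreover have "hf (happend h f y) n = f" "hx (happend h f y) n = hcur h"
    using len by (auto simp: hf_def hx_def hcur_def happend_def nth_append)
  ultimately have "hf (happend h f y) k \<in> Dset c piR Y k (hx (happend h f y) k)" if "k < Suc n" for k
    using that D assms(2) by (cases "k < n") (auto simp: less_Suc_eq)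
  then show ?thesis using len by (simp add: Hset_def happend_def)
qed

lemma Dset_subset_Fset: "Dset c piR Y n x \<subseteq> Fset"
  by (simp add: Dset_def)

lemma pol_arg_eq_period_loss:
  "pol_arg \<beta> piR Y Z d n W h = (\<lambda>\<omega>. period_loss \<beta> (d n h) (real_of_ereal (piRf piR Y n (d n h)))
     (\<lambda>y. W (happend h (d n h) y)) (hcur h) (Y (Suc n) \<omega>) (Z (Suc n) \<omega>))"
  by (simp add: pol_arg_def period_loss_def Let_def)

lemma Vpol_eq_0: "N \<le> n \<Longrightarrow> Vpol N \<beta> rho piR Y Z d n h = 0"
  by (simp add: Vpol_def)

lemma Vpol_eq_rho:
  assumes "n < N"
  shows "Vpol N \<beta> rho piR Y Z d n h = rho n (pol_arg \<beta> piR Y Z d n (Vpol N \<beta> rho piR Y Z d (Suc n)) h)"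
proof -
  have "N - n = Suc (N - Suc n)" using assms by simp
  moreover have "Vpol N \<beta> rho piR Y Z d (Suc n) = Vk \<beta> rho piR Y Z d (N - Suc n) (Suc n)"
    by (simp add: Vpol_def fun_eq_iff)
  ultimately show ?thesis by (simp add: Vpol_def)
qed

lemma backward_induct [case_names after before]:
  fixes N :: nat
  assumes after: "\<And>n. N \<le> n \<Longrightarrow> P n" and before: "\<And>n. n < N \<Longrightarrow> P (Suc n) \<Longrightarrow> P n"
  shows "P n"
proof (cases "N \<le> n")
  case False
  then have "n \<le> N" by simp
  then show ?thesis
    by (induction rule: inc_induct) (auto intro: after before)
qed (rule after)

lemma ak_nonneg: "0 \<le> \<beta> \<Longrightarrow> 0 \<le> ak \<beta> k"
  by (induction k) auto

locale reinsurance_model =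
  fixes M :: "'a measure" and p \<beta> :: real and N :: nat and constrained :: bool
    and Y Z :: "nat \<Rightarrow> 'a \<Rightarrow> real"
    and rho piR :: "nat \<Rightarrow> ('a \<Rightarrow> real) \<Rightarrow> ereal"
    and d :: "nat \<Rightarrow> hist \<Rightarrow> real \<Rightarrow> real"
  assumes prob_space: "prob_space M"
    and p_nonneg: "0 \<le> p"
    and \<beta>_nonneg: "0 \<le> \<beta>"
    and claims: "\<And>n. Y (Suc n) \<in> Lp_plus M p"
    and income: "\<And>n. Z (Suc n) \<in> Linf_plus M"
    and premium: "\<And>n. n < N \<Longrightarrow> premium_principle M p (piR n)"
    and premium_finite: "\<And>n. n < N \<Longrightarrow> piR n (Y (Suc n)) < \<infinity>"
    and risk: "\<And>n. n < N \<Longrightarrow> risk_measure M p (rho n)"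
    and risk_finite: "\<And>n l. n < N \<Longrightarrow> 0 \<le> l \<Longrightarrow> rho n (\<lambda>\<omega>. l * Y (Suc n) \<omega>) < \<infinity>"
    and policy: "is_policy N constrained piR Y d"
    and loss_measurable: "\<And>n h. n < N \<Longrightarrow> h \<in> Hset constrained piR Y n \<Longrightarrow>
           pol_arg \<beta> piR Y Z d n (Vpol N \<beta> rho piR Y Z d (Suc n)) h \<in> borel_measurable M"
begin

abbreviation V :: "nat \<Rightarrow> hist \<Rightarrow> ereal" where
  "V \<equiv> Vpol N \<beta> rho piR Y Z d"

(* The coefficients a_n, lower c_n and upper c_n extended by a_N = c_N = 0: their recursions
   then hold also at n = N - 1, and the induction starts from V_N = 0. *)
definition acoef_ext :: "nat \<Rightarrow> real" where
  "acoef_ext n = (if n < N then acoef N \<beta> n else 0)"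

definition c_low_ext :: "nat \<Rightarrow> ereal" where
  "c_low_ext n = (if n < N then c_low M N \<beta> Z n else 0)"

definition c_up_ext :: "nat \<Rightarrow> ereal" where
  "c_up_ext n = (if n < N then c_up N \<beta> rho piR Y n else 0)"

lemma acoef_ext_Suc: "n < N \<Longrightarrow> acoef_ext n = 1 + \<beta> * acoef_ext (Suc n)"
  by (cases "Suc n < N") (simp_all add: acoef_ext_def acoef_def Suc_diff_Suc[symmetric])

lemma c_low_ext_Suc:
  "n < N \<Longrightarrow> c_low_ext n = ereal (1 + \<beta> * acoef_ext (Suc n)) * esssup M (\<lambda>\<omega>. ereal (Z (Suc n) \<omega>))
                            + ereal \<beta> * c_low_ext (Suc n)"
  by (cases "Suc n < N") (simp_all add: acoef_ext_def c_low_ext_def acoef_def c_low_def Suc_diff_Suc[symmetric])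

lemma c_up_ext_Suc:
  "n < N \<Longrightarrow> c_up_ext n = rho n (\<lambda>\<omega>. (1 + \<beta> * acoef_ext (Suc n)) * Y (Suc n) \<omega>)
                            + ereal (1 + \<beta> * acoef_ext (Suc n)) * piR n (Y (Suc n))
                            + ereal \<beta> * c_up_ext (Suc n)"
  by (cases "Suc n < N") (simp_all add: acoef_ext_def c_up_ext_def acoef_def c_up_def Suc_diff_Suc[symmetric])

lemma acoef_ext_nonneg: "0 \<le> acoef_ext n"
  by (simp add: acoef_ext_def acoef_def ak_nonneg \<beta>_nonneg)

lemma c_low_ext_finite: "\<exists>c. c_low_ext n = ereal c"
proof (induction n rule: backward_induct[where N = N])
  case (after n)
  then show ?case by (simp add: c_low_ext_def)
next
  case (before n)
  obtain s where "esssup M (\<lambda>\<omega>. ereal (Z (Suc n) \<omega>)) = ereal s"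
    using Linf_plus_esssup[OF prob_space income] by metis
  with before show ?case by (auto simp: c_low_ext_Suc)
qed

lemma risk_claims_finite:
  assumes "n < N" "0 \<le> l"
  shows "\<exists>r. rho n (\<lambda>\<omega>. l * Y (Suc n) \<omega>) = ereal r"
proof -
  have "0 \<le> rho n (\<lambda>\<omega>. l * Y (Suc n) \<omega>)"
    using risk_measure_nonneg[OF prob_space risk[OF assms(1)] Lp_plus_cmult[OF claims assms(2)]] .
  with risk_finite[OF assms] show ?thesis by (cases "rho n (\<lambda>\<omega>. l * Y (Suc n) \<omega>)") auto
qed

lemma premium_claims_finite: "n < N \<Longrightarrow> \<exists>r. piR n (Y (Suc n)) = ereal r"
  using premium_principle_nonneg[OF prob_space premium claims] premium_finite
  by (cases "piR n (Y (Suc n))") auto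

lemma c_up_ext_finite: "\<exists>c. c_up_ext n = ereal c"
proof (induction n rule: backward_induct[where N = N])
  case (after n)
  then show ?case by (simp add: c_up_ext_def)
next
  case (before n)
  have "0 \<le> 1 + \<beta> * acoef_ext (Suc n)"
    using \<beta>_nonneg acoef_ext_nonneg by simp
  then obtain r where "rho n (\<lambda>\<omega>. (1 + \<beta> * acoef_ext (Suc n)) * Y (Suc n) \<omega>) = ereal r"
    using risk_claims_finite[OF before(1)] by metis
  moreover obtain q where "piR n (Y (Suc n)) = ereal q"
    using premium_claims_finite[OF before(1)] by metis
  ultimately show ?case using before by (auto simp: c_up_ext_Suc)
qed

lemma Vpol_bounds:
  assumes "h \<in> Hset constrained piR Y n"
  shows "- c_low_ext n - ereal (acoef_ext n * max (hcur h) 0) \<le> V n h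
         \<and> V n h \<le> c_up_ext n + ereal (acoef_ext n * max (- hcur h) 0)"
  using assms
proof (induction n arbitrary: h rule: backward_induct[where N = N])
  case (after n)
  then show ?case by (simp add: Vpol_eq_0 c_low_ext_def c_up_ext_def acoef_ext_def)
next
  case (before n)
  have f: "d n h \<in> Dset constrained piR Y n (hcur h)"
    using policy before by (simp add: is_policy_def)
  obtain cl cu where cl: "c_low_ext (Suc n) = ereal cl" and cu: "c_up_ext (Suc n) = ereal cu"
    using c_low_ext_finite c_up_ext_finite by metis
  have W: "ereal (- cl - acoef_ext (Suc n) * max x 0) \<le> V (Suc n) (happend h (d n h) x)
           \<and> V (Suc n) (happend h (d n h) x) \<le> ereal (cu + acoef_ext (Suc n) * max (- x) 0)" for x
    using before(2)[OF happend_in_Hset[OF before(3) f]] cl cu by simp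
  note bounds = risk_period_loss_bounds[where W = "\<lambda>x. V (Suc n) (happend h (d n h) x)"
      and Y = "Y (Suc n)" and Z = "Z (Suc n)",
      OF prob_space p_nonneg \<beta>_nonneg acoef_ext_nonneg
      claims income risk[OF before(1)] premium[OF before(1)] premium_finite[OF before(1)]
      subsetD[OF Dset_subset_Fset f] W]
  from loss_measurable[OF before(1,3)] show ?case
    unfolding Vpol_eq_rho[OF before(1)] pol_arg_eq_period_loss piRf_def
      c_low_ext_Suc[OF before(1)] c_up_ext_Suc[OF before(1)] acoef_ext_Suc[OF before(1)] cl cu
    using bounds before(1) by blast
qed

lemma Vpol_within_b_low_b_up:
  assumes "n < N" "h \<in> Hset constrained piR Y n"
  shows "b_low M N \<beta> Z n (hcur h) \<le> V n h \<and> V n h \<le> b_up N \<beta> rho piR Y n (hcur h)"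
  using Vpol_bounds[OF assms(2)] assms(1)
  by (simp add: b_low_def b_up_def c_low_ext_def c_up_ext_def acoef_ext_def)

end

theorem mainTheorem3:
  fixes M :: "'a measure" and p \<beta> :: real and N :: nat and constrained :: bool
    and Y Z :: "nat \<Rightarrow> 'a \<Rightarrow> real"
    and rho piR :: "nat \<Rightarrow> ('a \<Rightarrow> real) \<Rightarrow> ereal"
    and d :: "nat \<Rightarrow> hist \<Rightarrow> real \<Rightarrow> real"
  assumes "prob_space M"
    and "1 \<le> p"
    and "1 \<le> N"
    and "0 < \<beta>" and "\<beta> \<le> 1"
    and "\<forall>n\<ge>1. Y n \<in> Lp_plus M p"
    and "\<forall>n\<ge>1. Z n \<in> Linf_plus M"
    and "prob_space.indep_vars M (\<lambda>_. borel) (\<lambda>n \<omega>. (Y n \<omega>, Z n \<omega>)) {1..}"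
    and "\<forall>n<N. premium_principle M p (piR n) \<and> piR n (Y (Suc n)) < \<infinity>"
    and "\<forall>n<N. risk_measure M p (rho n) \<and> (\<forall>l\<ge>0. rho n (\<lambda>\<omega>. l * Y (Suc n) \<omega>) < \<infinity>)"
    and "is_policy N constrained piR Y d"
    and standing: "\<forall>n<N. \<forall>h\<in>Hset constrained piR Y n.
           pol_arg \<beta> piR Y Z d n (Vpol N \<beta> rho piR Y Z d (Suc n)) h \<in> borel_measurable M"
  shows "\<forall>n<N. \<forall>h\<in>Hset constrained piR Y n.
           b_low M N \<beta> Z n (hcur h) \<le> Vpol N \<beta> rho piR Y Z d n h
           \<and> Vpol N \<beta> rho piR Y Z d n h \<le> b_up N \<beta> rho piR Y n (hcur h)"
proof -
  interpret reinsurance_model M p \<beta> N constrained Y Z rho piR d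
  proof (rule reinsurance_model.intro)
    show "prob_space M" "0 \<le> p" "0 \<le> \<beta>" "is_policy N constrained piR Y d"
      using assms(1,2,4,11) by simp_all
    show "Y (Suc n) \<in> Lp_plus M p" "Z (Suc n) \<in> Linf_plus M" for n
      using assms(6,7) by simp_all
    show "premium_principle M p (piR n)" "piR n (Y (Suc n)) < \<infinity>"
      "risk_measure M p (rho n)" if "n < N" for n
      using assms(9,10) that by simp_all
    show "rho n (\<lambda>\<omega>. l * Y (Suc n) \<omega>) < \<infinity>" if "n < N" "0 \<le> l" for n l
      using assms(10) that by simp
    show "pol_arg \<beta> piR Y Z d n (Vpol N \<beta> rho piR Y Z d (Suc n)) h \<in> borel_measurable M"
      if "n < N" "h \<in> Hset constrained piR Y n" for n h
      using standing that by simp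
  qed
  show ?thesis using Vpol_within_b_low_b_up by blast
qed

end
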